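(* Let $n\ge1$ be an integer, $p\in(0,1)$, $q:=1-p$, and let $B_n$ be a binomial random variable with parameters $n$ and $p$. (i) The equation $\ln\frac{1-u}{-\ln u}-1-\frac12\,\frac{(1+u)\ln u}{1-u}=0$ has exactly one solution $u=u_*$ in $(0,1)$, and $u_*=0.00505778\ldots$. (ii) Let $u_{**}:=\frac{u_*}{1-u_*}=0.00508349\ldots$ and $j_{**}:=\Big\lfloor\frac{n-u_{**}q/p}{1+u_{**}q/p}\Big\rfloor$. Then $Q_n^{\mathrm{Lin,LC}}(x+\frac12)\le Q_n^{\mathrm{LC}}(x)$ for all real $x\le j_{**}$. (iii) If $n\le\frac pq\cdot\frac1{u_{**}}=\frac pq\cdot196.714\ldots$, then $Q_n^{\mathrm{Lin,LC}}(x+\frac12)\le Q_n^{\mathrm{LC}}(x)$ for all real $x\le n$. In particular, this holds for all $x\le n$ if $n\le196$ and $p\ge\frac12$.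
   Context: $Q_n(x):=\mathbf{P}(B_n\ge x)$ for $x\in\mathbb{R}$. $Q_n^{\mathrm{LC}}$ is the least log-concave majorant of $Q_n$ on $\mathbb{R}$; $Q_n^{\mathrm{Lin}}$ is the linear interpolation of $Q_n$ over $\mathbb{Z}$ (i.e. $Q_n^{\mathrm{Lin}}(x)=(1-(x-j))Q_n(j)+(x-j)Q_n(j+1)$ for $j\le x\le j+1$, $j\in\mathbb{Z}$); $Q_n^{\mathrm{Lin,LC}}$ is the least log-concave majorant of $Q_n^{\mathrm{Lin}}$ on $\mathbb{R}$. Here a least log-concave majorant of a function $\phi\ge0$ is the smallest function $g\ge\phi$ with $g\ge0$ and $\ln g$ concave (values $-\infty$ allowed). (In the paper's application, $p=\sigma^2/(d^2+\sigma^2)$ and $x=\frac qd y+np$, so that these quantities compare the bounds $c_2\mathbf{P}^{\mathrm{Lin,LC}}(T_n\ge y+h/2)$ and $c_2\mathbf{P}^{\mathrm{LC}}(T_n\ge y)$.) *)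

theory Defs
  imports "HOL-Probability.Probability"
begin

definition binom_tail :: "nat \<Rightarrow> real \<Rightarrow> real \<Rightarrow> real" where
  "binom_tail n p x = measure_pmf.prob (binomial_pmf n p) {k. x \<le> real k}"

text \<open>Log-concavity on the real line: g \<ge> 0 and ln g concave, with value -\<infinity>
  allowed (i.e. g may vanish). Written multiplicatively; powr gives 0 at base 0.\<close>
definition log_concave :: "(real \<Rightarrow> real) \<Rightarrow> bool" where
  "log_concave g \<longleftrightarrow> (\<forall>x. 0 \<le> g x) \<and>
     (\<forall>x y t. 0 < t \<and> t < 1 \<longrightarrow>
        g x powr (1 - t) * g y powr t \<le> g ((1 - t) * x + t * y))"

definition LC_majorant :: "(real \<Rightarrow> real) \<Rightarrow> real \<Rightarrow> real" where
  "LC_majorant \<phi> x = (INF g \<in> {g. log_concave g \<and> (\<forall>y. \<phi> y \<le> g y)}. g x)"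

definition lin_interp :: "(real \<Rightarrow> real) \<Rightarrow> real \<Rightarrow> real" where
  "lin_interp \<phi> x = (let j = real_of_int \<lfloor>x\<rfloor> in
      (1 - (x - j)) * \<phi> j + (x - j) * \<phi> (j + 1))"

definition Q_LC :: "nat \<Rightarrow> real \<Rightarrow> real \<Rightarrow> real" where
  "Q_LC n p = LC_majorant (binom_tail n p)"

definition Q_Lin_LC :: "nat \<Rightarrow> real \<Rightarrow> real \<Rightarrow> real" where
  "Q_Lin_LC n p = LC_majorant (lin_interp (binom_tail n p))"

definition ustar_eq :: "real \<Rightarrow> real" where
  "ustar_eq u = ln ((1 - u) / (- ln u)) - 1 - (1/2) * ((1 + u) * ln u / (1 - u))"

definition u_star :: real where
  "u_star = (THE u. 0 < u \<and> u < 1 \<and> ustar_eq u = 0)"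

definition u_sstar :: real where
  "u_sstar = u_star / (1 - u_star)"

definition j_sstar :: "nat \<Rightarrow> real \<Rightarrow> int" where
  "j_sstar n p = (let q = 1 - p in
     \<lfloor>(real n - u_sstar * q / p) / (1 + u_sstar * q / p)\<rfloor>)"

end

theory Submission
  imports Defs "HOL-Real_Asymp.Real_Asymp"
begin

text \<open>
  Write \<open>T k = P(B\<^sub>n \<ge> k)\<close> and \<open>\<rho> = T (j + 1) / T j\<close>. The binomial weights are
  log-concave, hence so are their tails, and every \<open>T k\<close> lies below the geometric sequence
  \<open>T j * \<rho> ^ (k - j)\<close>. On \<open>[j, j + 1]\<close> the log-concave majorant of \<open>Q\<^sub>n\<close> is at least the
  geometric interpolation \<open>T j * \<rho> powr (x - j)\<close>, while the linear interpolation of \<open>Q\<^sub>n\<close>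
  stays below the log-linear function \<open>T j * \<rho> powr (x - j - 1/2)\<close> as soon as
  \<open>1 - (1 - \<rho>) t \<le> \<rho> powr (t - 1/2)\<close> for all \<open>t\<close>. That condition is \<open>ustar_eq \<rho> \<le> 0\<close>,
  i.e. \<open>\<rho> \<ge> u\<^sub>*\<close>, which follows from the pmf ratio bound \<open>P(j + 1) \<ge> u\<^sub>*\<^sub>* P(j)\<close>
  because \<open>T j = P(j) + T (j + 1)\<close>; that ratio bound is what the hypotheses on \<open>x\<close> and \<open>n\<close>
  guarantee.

  In the variable \<open>a = - ln u / 2\<close> the function \<^const>\<open>ustar_eq\<close> becomes strictly convex
  and tends to \<open>0\<close> as \<open>a \<rightarrow> 0\<close>, so it has at most one positive zero and is negative
  before it; the zero is located by rational enclosures of \<open>exp\<close>.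
\<close>

section \<open>Enclosing exp by Taylor polynomials and repeated squaring\<close>

lemma exp_le_taylor:
  fixes x :: real
  assumes "0 \<le> x" "x ^ N < fact N"
  shows "exp x \<le> (\<Sum>m<N. x ^ m / fact m) / (1 - x ^ N / fact N)"
proof -
  define S r where "S = (\<Sum>m<N. x ^ m / fact m)" and "r = x ^ N / fact N"
  obtain t where t: "\<bar>t\<bar> \<le> \<bar>x\<bar>" "exp x = S + exp t * r"
    using Maclaurin_exp_le[of x N] by (auto simp: S_def r_def)
  have "exp t * r \<le> exp x * r"
    using t(1) assms(1) by (intro mult_right_mono) (auto simp: r_def)
  then have "exp x * (1 - r) \<le> S"
    using t(2) by (simp add: algebra_simps)
  then show ?thesis using assms(2) by (simp add: S_def r_def le_divide_eq)
qed

lemma exp_ge_taylor: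
  fixes x :: real
  assumes "0 \<le> x"
  shows "(\<Sum>m<N. x ^ m / fact m) \<le> exp x"
proof -
  obtain t where "exp x = (\<Sum>m<N. x ^ m / fact m) + exp t / fact N * x ^ N"
    using Maclaurin_exp_le[of x N] by blast
  then show ?thesis using assms by simp
qed

lemma exp_le_squaring_chain:
  fixes x :: real
  assumes "exp x \<le> b" "successively (\<lambda>a c. a * a \<le> c) (b # bs)"
  shows "exp (2 ^ length bs * x) \<le> last (b # bs)"
  using assms
proof (induction bs arbitrary: x b)
  case (Cons c cs)
  have "exp (2 * x) = exp x * exp x" by (simp add: exp_add[symmetric])
  also have "\<dots> \<le> b * b"
    using Cons.prems(1) by (intro mult_mono) (auto intro: order_trans[OF exp_ge_zero])
  also have "\<dots> \<le> c" using Cons.prems(2) by simp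
  finally have "exp (2 ^ length cs * (2 * x)) \<le> last (c # cs)"
    using Cons.prems(2) by (intro Cons.IH) auto
  then show ?case by (simp add: mult.assoc mult.commute)
qed simp

lemma exp_ge_squaring_chain:
  fixes x :: real
  assumes "b \<le> exp x" "0 \<le> b" "successively (\<lambda>a c. 0 \<le> c \<and> c \<le> a * a) (b # bs)"
  shows "last (b # bs) \<le> exp (2 ^ length bs * x)"
  using assms
proof (induction bs arbitrary: x b)
  case (Cons c cs)
  have "c \<le> b * b" using Cons.prems(3) by simp
  also have "\<dots> \<le> exp x * exp x" using Cons.prems(1,2) by (intro mult_mono) auto
  also have "\<dots> = exp (2 * x)" by (simp add: exp_add[symmetric])
  finally have "last (c # cs) \<le> exp (2 ^ length cs * (2 * x))"
    using Cons.prems(3) by (intro Cons.IH) auto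
  then show ?case by (simp add: mult.assoc mult.commute)
qed simp

lemma exp_le_by_certificate:
  fixes X x b B :: real
  assumes "X = 2 ^ length bs * x" "0 \<le> x" "x ^ N < fact N"
    "(\<Sum>m<N. x ^ m / fact m) / (1 - x ^ N / fact N) \<le> b"
    "successively (\<lambda>a c. a * a \<le> c) (b # bs)" "last (b # bs) \<le> B"
  shows "exp X \<le> B"
  using exp_le_squaring_chain[OF order_trans[OF exp_le_taylor assms(4)]] assms by fastforce

lemma exp_ge_by_certificate:
  fixes X x b B :: real
  assumes "X = 2 ^ length bs * x" "0 \<le> x" "0 \<le> b" "b \<le> (\<Sum>m<N. x ^ m / fact m)"
    "successively (\<lambda>a c. 0 \<le> c \<and> c \<le> a * a) (b # bs)" "B \<le> last (b # bs)"
  shows "B \<le> exp X"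
  using exp_ge_squaring_chain[OF order_trans[OF assms(4) exp_ge_taylor]] assms by fastforce

section \<open>Convex functions vanishing at the origin\<close>

lemma slope_less_of_deriv_strict_mono:
  fixes f f' :: "real \<Rightarrow> real"
  assumes deriv: "\<And>t. x \<le> t \<Longrightarrow> t \<le> z \<Longrightarrow> (f has_real_derivative f' t) (at t)"
    and mono: "\<And>s t. x \<le> s \<Longrightarrow> s < t \<Longrightarrow> t \<le> z \<Longrightarrow> f' s < f' t"
    and "x < y" "y < z"
  shows "(f y - f x) * (z - y) < (f z - f y) * (y - x)"
proof -
  obtain s where s: "x < s" "s < y" "f y - f x = (y - x) * f' s"
    using MVT2[of x y f f'] deriv \<open>x < y\<close> \<open>y < z\<close> by force
  obtain t where t: "y < t" "t < z" "f z - f y = (z - y) * f' t"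
    using MVT2[of y z f f'] deriv \<open>x < y\<close> \<open>y < z\<close> by force
  have "(y - x) * (z - y) * f' s < (y - x) * (z - y) * f' t"
    using s t mono \<open>x < y\<close> \<open>y < z\<close> by (intro mult_strict_left_mono) auto
  then show ?thesis unfolding s(3) t(3) by (simp add: mult_ac)
qed

lemma neg_before_zero_of_deriv_strict_mono:
  fixes f f' :: "real \<Rightarrow> real"
  assumes deriv: "\<And>t. 0 < t \<Longrightarrow> (f has_real_derivative f' t) (at t)"
    and mono: "\<And>s t. 0 < s \<Longrightarrow> s < t \<Longrightarrow> f' s < f' t"
    and lim: "(f \<longlongrightarrow> 0) (at_right 0)" and zero: "f b = 0" and "0 < a" "a < b"
  shows "f a < 0"
proof -
  have chord: "(f y - f x) * (b - y) < (f b - f y) * (y - x)" if "0 < x" "x < y" "y < b" for x y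
    using that by (intro slope_less_of_deriv_strict_mono[where f' = f'] deriv mono) auto
  have nonpos: "f y \<le> 0" if y: "0 < y" "y < b" for y
  proof (rule ccontr)
    assume "\<not> f y \<le> 0"
    \<comment> \<open>then the chord from a point \<open>e\<close> near \<open>0\<close>, where \<open>f e < f y\<close>, to \<open>b\<close> passes below \<open>f y\<close>\<close>
    then have "\<forall>\<^sub>F e in at_right 0. f e < f y"
      using lim by (intro order_tendstoD) auto
    then obtain c where c: "0 < c" "\<And>e. 0 < e \<Longrightarrow> e < c \<Longrightarrow> f e < f y"
      by (auto simp: eventually_at_right_field)
    define e where "e = min c y / 2"
    have e: "0 < e" "e < c" "e < y" using c y by (auto simp: e_def)
    have "f y * (b - e) < f e * (b - y)"
      using chord[OF e(1,3) y(2)] zero by (simp add: algebra_simps)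
    also have "\<dots> < f y * (b - y)" using c e y by (intro mult_strict_right_mono) auto
    also have "\<dots> \<le> f y * (b - e)" using \<open>\<not> f y \<le> 0\<close> e by (intro mult_left_mono) auto
    finally show False by simp
  qed
  have "f a \<noteq> 0"
  proof
    assume "f a = 0"
    then have "0 < f (a / 2) * (b - a)"
      using chord[of "a / 2" a] zero \<open>0 < a\<close> \<open>a < b\<close> by simp
    moreover have "f (a / 2) \<le> 0" using nonpos \<open>0 < a\<close> \<open>a < b\<close> by simp
    ultimately show False using \<open>a < b\<close> by (simp add: zero_less_mult_iff)
  qed
  with nonpos[of a] \<open>0 < a\<close> \<open>a < b\<close> show ?thesis by simp
qed

lemma sinh_gt_self: "0 < a \<Longrightarrow> a < sinh (a :: real)"
proof -
  assume a: "0 < a"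
  have "(\<lambda>x. sinh x - x) 0 < (\<lambda>x. sinh x - x) a"
  proof (rule DERIV_pos_imp_increasing_open[OF a])
    fix x :: real assume x: "0 < x" "x < a"
    have "1 < cosh x" using cosh_real_ge_1[of x] cosh_real_one_iff[of x] x by linarith
    then show "\<exists>y. ((\<lambda>x. sinh x - x) has_real_derivative y) (at x) \<and> 0 < y"
      by (intro exI[of _ "cosh x - 1"]) (auto intro!: derivative_eq_intros)
  qed (intro continuous_intros)
  then show ?thesis by simp
qed

lemma sinh_lt_mult_cosh: "0 < a \<Longrightarrow> sinh a < a * cosh (a :: real)"
proof -
  assume a: "0 < a"
  have "(\<lambda>x. x * cosh x - sinh x) 0 < (\<lambda>x. x * cosh x - sinh x) a"
  proof (rule DERIV_pos_imp_increasing_open[OF a])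
    fix x :: real assume x: "0 < x" "x < a"
    then show "\<exists>y. ((\<lambda>x. x * cosh x - sinh x) has_real_derivative y) (at x) \<and> 0 < y"
      by (intro exI[of _ "x * sinh x"]) (auto intro!: derivative_eq_intros)
  qed (intro continuous_intros)
  then show ?thesis by simp
qed

section \<open>The equation of part (i)\<close>

lemma ln_div_add_linear_mono:
  fixes a c l l' :: real
  assumes "0 < a" "0 < l" "l \<le> l'" "1 \<le> c * l"
  shows "ln (a / l) + c * l \<le> ln (a / l') + c * l'"
proof -
  have "ln (a / l) - ln (a / l') = ln (l' / l)"
    using assms by (simp add: ln_div)
  also have "\<dots> \<le> l' / l - 1"
    using assms by (intro ln_le_minus_one) simp
  also have "\<dots> = (l' - l) * (1 / l)"
    using assms by (simp add: field_simps)
  also have "\<dots> \<le> (l' - l) * c"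
    using assms by (intro mult_left_mono) (simp_all add: divide_le_eq mult.commute)
  finally show ?thesis by (simp add: algebra_simps)
qed

lemma ustar_eq_altdef:
  assumes "0 < u" "u < 1"
  shows "ustar_eq u = ln ((1 - u) / - ln u) + (1 + u) / (2 * (1 - u)) * - ln u - 1"
  unfolding ustar_eq_def using assms by (simp add: field_simps)

text \<open>Replacing \<open>- ln u\<close> by \<open>l\<close> in \<open>ustar_eq_altdef\<close> gives a function that is nondecreasing
  in \<open>l \<ge> 2\<close>, so a one-sided bound on \<open>- ln u\<close> together with one on a single logarithm
  decides the sign of \<open>ustar_eq u\<close>.\<close>
lemma ustar_eq_pos_if_bounds:
  fixes u l m :: real
  assumes u: "0 < u" "u < 1" and l: "2 \<le> l" "exp l \<le> 1 / u"
    and m: "l / (1 - u) \<le> exp (- m)" and sign: "0 < m + (1 + u) / (2 * (1 - u)) * l - 1"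
  shows "0 < ustar_eq u"
proof -
  have "l \<le> ln (1 / u)" using u l by (subst ln_ge_iff) auto
  then have l_le: "l \<le> - ln u" using u by (simp add: ln_div)
  have "ln (l / (1 - u)) \<le> - m"
    using m u l ln_le_cancel_iff[of "l / (1 - u)" "exp (- m)"] by simp
  then have m_le: "m \<le> ln ((1 - u) / l)" using u l by (simp add: ln_div)
  have "1 / 2 * 2 \<le> (1 + u) / (2 * (1 - u)) * l"
    using u l by (intro mult_mono) (simp_all add: field_simps)
  then have "ln ((1 - u) / l) + (1 + u) / (2 * (1 - u)) * l
      \<le> ln ((1 - u) / - ln u) + (1 + u) / (2 * (1 - u)) * - ln u"
    using u l l_le by (intro ln_div_add_linear_mono) auto
  then show ?thesis using sign m_le ustar_eq_altdef[OF u] by linarith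
qed

lemma two_le_minus_ln:
  fixes u :: real
  assumes "0 < u" "u \<le> 1 / 9"
  shows "2 \<le> - ln u"
proof -
  have "exp 2 = exp 1 * (exp 1 :: real)" by (simp flip: exp_add)
  also have "\<dots> \<le> 3 * 3" using exp_le by (intro mult_mono) auto
  also have "\<dots> \<le> 1 / u" using assms by (simp add: field_simps)
  finally have "2 \<le> ln (1 / u)" using assms by (subst ln_ge_iff) auto
  then show ?thesis using assms by (simp add: ln_div)
qed

lemma ustar_eq_neg_if_bounds:
  fixes u l M :: real
  assumes u: "0 < u" "u \<le> 1 / 9" and l: "1 / u \<le> exp l"
    and M: "exp (- M) \<le> l / (1 - u)" and sign: "M + (1 + u) / (2 * (1 - u)) * l - 1 < 0"
  shows "ustar_eq u < 0"
proof -
  have u1: "u < 1" using u by simp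
  have "ln (1 / u) \<le> l" using u l ln_le_cancel_iff[of "1 / u" "exp l"] by simp
  then have l_ge: "- ln u \<le> l" using u by (simp add: ln_div)
  have two: "2 \<le> - ln u" using u by (rule two_le_minus_ln)
  have "- M \<le> ln (l / (1 - u))" using M u1 two l_ge by (subst ln_ge_iff) auto
  then have M_ge: "ln ((1 - u) / l) \<le> M" using u1 two l_ge by (simp add: ln_div)
  have "1 / 2 * 2 \<le> (1 + u) / (2 * (1 - u)) * - ln u"
    using u1 u two by (intro mult_mono) (simp_all add: field_simps)
  then have "ln ((1 - u) / - ln u) + (1 + u) / (2 * (1 - u)) * - ln u
      \<le> ln ((1 - u) / l) + (1 + u) / (2 * (1 - u)) * l"
    using u1 two l_ge by (intro ln_div_add_linear_mono) auto
  then show ?thesis using sign M_ge ustar_eq_altdef[OF u(1) u1] by linarith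
qed

text \<open>These two points bracket \<^const>\<open>u_star\<close> tightly enough for every decimal bound of the
  theorem, including those on \<^const>\<open>u_sstar\<close> and its reciprocal.\<close>

lemma ustar_eq_pos_at: "0 < ustar_eq 0.0050577855"
proof (rule ustar_eq_pos_if_bounds[where l = "5.28682653" and m = "-1.67028879"])
  show "exp 5.28682653 \<le> 1 / (0.0050577855 :: real)"
    by (rule exp_le_by_certificate[where x = "5.28682653 / 32" and N = 8 and b = "1.1796447444"
          and bs = "[1.391561723, 1.936444029, 3.7498154775, 14.0611161153, 197.714986408]"])
      (simp_all add: eval_nat_numeral)
  show "5.28682653 / (1 - 0.0050577855) \<le> exp (- (- 1.67028879 :: real))"
    by (rule exp_ge_by_certificate[where x = "1.67028879 / 16" and N = 8 and b = "1.1100366684"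
          and bs = "[1.2321814051, 1.518271015, 2.3051468749, 5.3137021148]"])
      (simp_all add: eval_nat_numeral)
qed simp_all

lemma ustar_eq_neg_at: "ustar_eq 0.005057788 < 0"
proof (rule ustar_eq_neg_if_bounds[where l = "5.28682605" and M = "-1.67028869"])
  show "1 / (0.005057788 :: real) \<le> exp 5.28682605"
    by (rule exp_ge_by_certificate[where x = "5.28682605 / 32" and N = 8 and b = "1.1796447266"
          and bs = "[1.3915616809, 1.9364439117, 3.7498150231, 14.0611127074, 197.7148905702]"])
      (simp_all add: eval_nat_numeral)
  show "exp (- (- 1.67028869 :: real)) \<le> 5.28682605 / (1 - 0.005057788)"
    by (rule exp_le_by_certificate[where x = "1.67028869 / 16" and N = 8 and b = "1.1100366615"
          and bs = "[1.2321813899, 1.5182709777, 2.3051467618, 5.3137015935]"])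
      (simp_all add: eval_nat_numeral)
qed simp_all

text \<open>The substitution \<open>u = exp (-2 a)\<close> turns \<^const>\<open>ustar_eq\<close> into a strictly convex
  function of \<open>a > 0\<close>.\<close>

definition ustar_hyp :: "real \<Rightarrow> real" where
  "ustar_hyp a = ln (sinh a / a) + a * cosh a / sinh a - a - 1"

definition ustar_hyp' :: "real \<Rightarrow> real" where
  "ustar_hyp' a = 2 * cosh a / sinh a - 1 / a - a / (sinh a)\<^sup>2 - 1"

lemma ustar_eq_exp:
  assumes a: "0 < a"
  shows "ustar_eq (exp (- 2 * a)) = ustar_hyp a"
proof -
  have exp2: "exp (- 2 * a) = exp (- a) * exp (- a)" by (simp flip: exp_add)
  have minus: "1 - exp (- 2 * a) = 2 * exp (- a) * sinh a"
    unfolding exp2 by (simp add: sinh_def exp_minus field_simps)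
  have plus: "1 + exp (- 2 * a) = 2 * exp (- a) * cosh a"
    unfolding exp2 by (simp add: cosh_def exp_minus field_simps)
  have s: "0 < sinh a" using a by simp
  have "ln ((1 - exp (- 2 * a)) / - ln (exp (- 2 * a))) = ln (exp (- a) * (sinh a / a))"
    unfolding minus by simp
  also have "\<dots> = ln (exp (- a)) + ln (sinh a / a)"
    using s a by (intro ln_mult_pos) auto
  finally have l: "ln ((1 - exp (- 2 * a)) / - ln (exp (- 2 * a))) = - a + ln (sinh a / a)"
    by simp
  have r: "(1 + exp (- 2 * a)) * ln (exp (- 2 * a)) / (1 - exp (- 2 * a))
      = - 2 * a * cosh a / sinh a"
    unfolding minus plus using s by (simp add: field_simps)
  show ?thesis unfolding ustar_eq_def l r ustar_hyp_def by (simp add: field_simps)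
qed

lemma cosh_mult_cosh: "cosh (a :: real) * cosh a = sinh a * sinh a + 1"
  using cosh_square_eq[of a] by (simp add: power2_eq_square)

lemma ustar_hyp_has_derivative:
  "0 < a \<Longrightarrow> (ustar_hyp has_real_derivative ustar_hyp' a) (at a)"
  unfolding ustar_hyp_def[abs_def]
  apply (rule derivative_eq_intros refl | simp)+
  apply (simp add: ustar_hyp'_def field_simps power2_eq_square)
  using cosh_mult_cosh[of a] by algebra

lemma ustar_hyp'_has_derivative:
  "0 < a \<Longrightarrow> (ustar_hyp' has_real_derivative
     (1 / a\<^sup>2 - 1 / (sinh a)\<^sup>2) + 2 * (a * cosh a - sinh a) / (sinh a) ^ 3) (at a)"
  unfolding ustar_hyp'_def[abs_def]
  apply (rule derivative_eq_intros refl | simp)+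
  apply (simp add: field_simps power2_eq_square power3_eq_cube)
  using cosh_mult_cosh[of a] by algebra

lemma ustar_hyp'_strict_mono:
  assumes "0 < x" "x < y"
  shows "ustar_hyp' x < ustar_hyp' y"
proof (rule DERIV_pos_imp_increasing[OF \<open>x < y\<close>])
  fix t assume "x \<le> t" "t \<le> y"
  then have t: "0 < t" using assms by simp
  have "1 / (sinh t)\<^sup>2 < 1 / t\<^sup>2"
    using sinh_gt_self[OF t] t by (intro divide_strict_left_mono power_strict_mono) auto
  moreover have "0 < 2 * (t * cosh t - sinh t) / (sinh t) ^ 3"
    using sinh_lt_mult_cosh[OF t] t by simp
  ultimately show "\<exists>d. (ustar_hyp' has_real_derivative d) (at t) \<and> 0 < d"
    using ustar_hyp'_has_derivative[OF t] by (intro exI conjI) (assumption, linarith)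
qed

lemma ustar_hyp_tendsto_zero: "(ustar_hyp \<longlongrightarrow> 0) (at_right 0)"
  unfolding ustar_hyp_def[abs_def] sinh_def cosh_def scaleR_conv_of_real by real_asymp

lemma ustar_eq_neg_above_zero:
  assumes v: "0 < v" "ustar_eq v = 0" and \<rho>: "v < \<rho>" "\<rho> < 1"
  shows "ustar_eq \<rho> < 0"
proof -
  define a b where "a = - ln \<rho> / 2" and "b = - ln v / 2"
  have ab: "0 < a" "a < b" using v \<rho> by (simp_all add: a_def b_def)
  have "ustar_eq \<rho> = ustar_hyp a" "ustar_eq v = ustar_hyp b"
    using ustar_eq_exp[of a] ustar_eq_exp[of b] ab v \<rho>
    by (simp_all add: a_def b_def)
  then show ?thesis
    using neg_before_zero_of_deriv_strict_mono[OF ustar_hyp_has_derivative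
        ustar_hyp'_strict_mono ustar_hyp_tendsto_zero _ ab] v by simp
qed

lemma ustar_eq_zero_between:
  obtains v where "0.0050577855 < v" "v < 0.005057788" "ustar_eq v = 0"
proof -
  have "continuous_on {0.0050577855..0.005057788} ustar_eq"
    unfolding ustar_eq_def by (intro continuous_intros) auto
  then obtain v where "0.0050577855 \<le> v" "v \<le> 0.005057788" "ustar_eq v = 0"
    using IVT2'[of ustar_eq "0.005057788" 0 "0.0050577855"] ustar_eq_pos_at ustar_eq_neg_at by auto
  moreover have "0.0050577855 \<noteq> v" "v \<noteq> 0.005057788"
    using ustar_eq_pos_at ustar_eq_neg_at \<open>ustar_eq v = 0\<close> by (metis less_irrefl)+
  ultimately show ?thesis using that by (meson order_le_neq_trans)
qed

lemma ustar_eq_zero_unique: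
  assumes "0 < v" "v < 1" "ustar_eq v = 0" "0 < w" "w < 1" "ustar_eq w = 0"
  shows "v = w"
  using ustar_eq_neg_above_zero assms by (metis less_irrefl linorder_neqE_linordered_idom)

lemma ustar_eq_ex1_zero: "\<exists>!u. 0 < u \<and> u < 1 \<and> ustar_eq u = 0"
proof -
  obtain v where "0.0050577855 < v" "v < 0.005057788" "ustar_eq v = 0"
    by (rule ustar_eq_zero_between)
  then show ?thesis using ustar_eq_zero_unique by (intro ex1I[of _ v]) auto
qed

lemma u_star_bounds: "0.0050577855 < u_star" "u_star < 0.005057788"
  and ustar_eq_u_star: "ustar_eq u_star = 0"
proof -
  obtain v where v: "0.0050577855 < v" "v < 0.005057788" "ustar_eq v = 0"
    by (rule ustar_eq_zero_between)
  have "u_star = v"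
    unfolding u_star_def using v ustar_eq_zero_unique by (intro the_equality) auto
  then show "0.0050577855 < u_star" "u_star < 0.005057788" "ustar_eq u_star = 0"
    using v by simp_all
qed

lemma ustar_eq_nonpos_above_u_star: "u_star \<le> \<rho> \<Longrightarrow> \<rho> < 1 \<Longrightarrow> ustar_eq \<rho> \<le> 0"
  using ustar_eq_neg_above_zero[OF _ ustar_eq_u_star] u_star_bounds ustar_eq_u_star
  by (cases "\<rho> = u_star") force+

lemma u_star_pos: "0 < u_star" and u_star_less_1: "u_star < 1"
  using u_star_bounds by simp_all

lemma u_sstar_pos: "0 < u_sstar"
  using u_star_pos u_star_less_1 by (simp add: u_sstar_def)

lemma u_sstar_bounds:
  "0.00508349 \<le> u_sstar" "u_sstar < 0.00508350" "196.714 \<le> 1 / u_sstar" "1 / u_sstar < 196.715"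
  using u_star_bounds u_star_pos u_star_less_1 by (simp_all add: u_sstar_def field_simps)

section \<open>Least log-concave majorants\<close>

lemma log_concave_const: "0 \<le> c \<Longrightarrow> log_concave (\<lambda>_. c)"
  unfolding log_concave_def by (simp flip: powr_add)

lemma log_concave_exponential:
  assumes C: "0 \<le> C" and \<rho>: "0 < \<rho>"
  shows "log_concave (\<lambda>y. C * \<rho> powr (y - c))"
  unfolding log_concave_def
proof (intro conjI allI impI)
  fix x y t :: real
  have "(C * \<rho> powr (x - c)) powr (1 - t) * (C * \<rho> powr (y - c)) powr t
      = (C powr (1 - t) * C powr t) * (\<rho> powr ((x - c) * (1 - t)) * \<rho> powr ((y - c) * t))"
    using C \<rho> by (simp add: powr_mult powr_powr mult_ac)
  also have "\<dots> = C * \<rho> powr ((1 - t) * x + t * y - c)"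
    using C by (simp flip: powr_add) (simp add: algebra_simps)
  finally show "(C * \<rho> powr (x - c)) powr (1 - t) * (C * \<rho> powr (y - c)) powr t
      \<le> C * \<rho> powr ((1 - t) * x + t * y - c)" by simp
qed (use C in simp)

lemma LC_majorant_le:
  assumes "log_concave g" "\<And>y. \<phi> y \<le> g y"
  shows "LC_majorant \<phi> x \<le> g x"
  unfolding LC_majorant_def
proof (rule cINF_lower)
  show "bdd_below ((\<lambda>g. g x) ` {g. log_concave g \<and> (\<forall>y. \<phi> y \<le> g y)})"
    by (rule bdd_belowI[of _ 0]) (auto simp: log_concave_def)
qed (use assms in auto)

lemma LC_majorant_ge:
  assumes "log_concave g\<^sub>0" "\<And>y. \<phi> y \<le> g\<^sub>0 y"
    and "\<And>g. log_concave g \<Longrightarrow> \<forall>y. \<phi> y \<le> g y \<Longrightarrow> c \<le> g x"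
  shows "c \<le> LC_majorant \<phi> x"
  unfolding LC_majorant_def using assms by (intro cINF_greatest) auto

lemma LC_majorant_ge_interpolation:
  assumes "log_concave g\<^sub>0" "\<And>y. \<phi> y \<le> g\<^sub>0 y"
    and "0 \<le> \<phi> a" "0 \<le> \<phi> b" "0 \<le> t" "t \<le> 1"
  shows "\<phi> a powr (1 - t) * \<phi> b powr t \<le> LC_majorant \<phi> ((1 - t) * a + t * b)"
proof (rule LC_majorant_ge[OF assms(1,2)])
  fix g assume g: "log_concave g" "\<forall>y. \<phi> y \<le> g y"
  consider "t = 0" | "t = 1" | "0 < t" "t < 1" using assms by linarith
  then show "\<phi> a powr (1 - t) * \<phi> b powr t \<le> g ((1 - t) * a + t * b)"
  proof cases
    case 1
    then show ?thesis using g assms by (auto intro: order_trans[of _ "\<phi> a"])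
  next
    case 2
    then show ?thesis using g assms by (auto intro: order_trans[of _ "\<phi> b"])
  next
    case 3
    have "\<phi> a powr (1 - t) * \<phi> b powr t \<le> g a powr (1 - t) * g b powr t"
      using g assms 3 by (intro mult_mono powr_mono2) auto
    also have "\<dots> \<le> g ((1 - t) * a + t * b)"
      using g 3 unfolding log_concave_def by blast
    finally show ?thesis .
  qed
qed

lemma lin_interp_le_const: "(\<And>y. \<phi> y \<le> c) \<Longrightarrow> lin_interp \<phi> x \<le> c"
proof -
  assume le: "\<And>y. \<phi> y \<le> c"
  define t where "t = x - real_of_int \<lfloor>x\<rfloor>"
  have t: "0 \<le> t" "t \<le> 1" unfolding t_def by linarith+
  have "lin_interp \<phi> x = (1 - t) * \<phi> \<lfloor>x\<rfloor> + t * \<phi> (\<lfloor>x\<rfloor> + 1)"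
    unfolding lin_interp_def Let_def t_def by simp
  also have "\<dots> \<le> (1 - t) * c + t * c"
    using t le by (intro add_mono mult_left_mono) auto
  finally show ?thesis by (simp add: algebra_simps)
qed

text \<open>With \<open>m = (1 - \<rho>) / - ln \<rho>\<close> the line is \<open>(1 + \<rho>) / 2 + m ln w\<close> for
  \<open>w = \<rho> powr (t - 1/2)\<close>, and \<open>w - m ln w\<close> is minimal at \<open>w = m\<close>; the condition
  \<open>ustar_eq \<rho> \<le> 0\<close> says precisely that this minimum \<open>m - m ln m\<close> is at least \<open>(1 + \<rho>) / 2\<close>.\<close>
lemma affine_le_powr_of_ustar_eq_nonpos:
  fixes \<rho> t :: real
  assumes \<rho>: "0 < \<rho>" "\<rho> < 1" and ustar: "ustar_eq \<rho> \<le> 0"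
  shows "1 - (1 - \<rho>) * t \<le> \<rho> powr (t - 1/2)"
proof -
  define m where "m = (1 - \<rho>) / - ln \<rho>"
  define w where "w = \<rho> powr (t - 1/2)"
  have m: "0 < m" using \<rho> by (simp add: m_def divide_pos_neg)
  have w: "0 < w" using \<rho> by (simp add: w_def)
  have "ustar_eq \<rho> = ln m - 1 + (1 + \<rho>) / (2 * m)"
    unfolding ustar_eq_def m_def using \<rho> by (simp add: field_simps)
  then have "m * (ln m - 1 + (1 + \<rho>) / (2 * m)) \<le> 0"
    using ustar m by (simp add: mult_nonneg_nonpos)
  moreover have "m * (ln m - 1 + (1 + \<rho>) / (2 * m)) = m * ln m - m + (1 + \<rho>) / 2"
    using m by (simp add: field_simps)
  ultimately have min: "(1 + \<rho>) / 2 \<le> m - m * ln m" by linarith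
  have "ln (w / m) \<le> w / m - 1" using w m by (intro ln_le_minus_one) simp
  then have "m * (ln w - ln m) \<le> m * (w / m - 1)"
    using w m by (intro mult_left_mono) (auto simp: ln_div)
  then have tangent: "m * ln w \<le> m * ln m + w - m" using m by (simp add: algebra_simps)
  have "1 - (1 - \<rho>) * t = (1 + \<rho>) / 2 + m * ln w"
    using \<rho> by (simp add: w_def m_def ln_powr field_simps)
  also have "\<dots> \<le> w" using min tangent by linarith
  finally show ?thesis by (simp add: w_def)
qed

lemma lin_interp_le_geometric:
  assumes \<rho>: "0 < \<rho>" "\<rho> < 1" "ustar_eq \<rho> \<le> 0" and C: "0 \<le> C"
    and le: "\<And>k::int. \<phi> k \<le> C * \<rho> powr (k - c)"
  shows "lin_interp \<phi> y \<le> C * \<rho> powr (y - c - 1/2)"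
proof -
  define k where "k = \<lfloor>y\<rfloor>"
  define t where "t = y - k"
  have t: "0 \<le> t" "t < 1" unfolding t_def k_def by linarith+
  have "\<rho> powr (real_of_int (k + 1) - c) = \<rho> powr ((k - c) + 1)"
    by (simp add: algebra_simps)
  also have "\<dots> = \<rho> powr (k - c) * \<rho>" using \<rho> by (simp add: powr_add)
  finally have succ: "\<phi> (k + 1) \<le> C * \<rho> powr (k - c) * \<rho>"
    using le[of "k + 1"] by (simp add: mult.assoc)
  have "lin_interp \<phi> y = (1 - t) * \<phi> k + t * \<phi> (k + 1)"
    unfolding lin_interp_def Let_def t_def k_def by simp
  also have "\<dots> \<le> (1 - t) * (C * \<rho> powr (k - c)) + t * (C * \<rho> powr (k - c) * \<rho>)"
    using le[of k] succ t by (intro add_mono mult_left_mono) auto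
  also have "\<dots> = C * \<rho> powr (k - c) * (1 - (1 - \<rho>) * t)"
    by (simp add: algebra_simps)
  also have "\<dots> \<le> C * \<rho> powr (k - c) * \<rho> powr (t - 1/2)"
    using affine_le_powr_of_ustar_eq_nonpos[OF \<rho>] C by (intro mult_left_mono) auto
  also have "\<dots> = C * \<rho> powr (y - c - 1/2)"
    by (simp add: t_def mult.assoc flip: powr_add) (simp add: algebra_simps)
  finally show ?thesis .
qed

lemma LC_majorant_lin_interp_le_geometric:
  assumes "0 < \<rho>" "\<rho> < 1" "ustar_eq \<rho> \<le> 0" "0 \<le> C"
    and "\<And>k::int. \<phi> k \<le> C * \<rho> powr (k - c)"
  shows "LC_majorant (lin_interp \<phi>) (x + 1/2) \<le> C * \<rho> powr (x - c)"
proof -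
  have "lin_interp \<phi> y \<le> C * \<rho> powr (y - (c + 1/2))" for y
    using lin_interp_le_geometric[OF assms] by (simp add: diff_diff_eq)
  then have "LC_majorant (lin_interp \<phi>) (x + 1/2) \<le> C * \<rho> powr (x + 1/2 - (c + 1/2))"
    using assms by (intro LC_majorant_le log_concave_exponential) auto
  then show ?thesis by simp
qed

section \<open>Log-concave sequences and binomial tails\<close>

text \<open>The last clause is the usual "no internal zeros" condition, strengthened so that
  zeros can only form a final segment.\<close>
definition log_concave_seq :: "(nat \<Rightarrow> real) \<Rightarrow> bool" where
  "log_concave_seq f \<longleftrightarrow> (\<forall>k. 0 \<le> f k) \<and> (\<forall>k. f (Suc (Suc k)) * f k \<le> (f (Suc k))\<^sup>2)
     \<and> (\<forall>k. f k = 0 \<longrightarrow> f (Suc k) = 0)"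

lemma log_concave_seq_ratio_antimono:
  assumes f: "log_concave_seq f" and "m \<le> i"
  shows "f (Suc i) * f m \<le> f i * f (Suc m)"
  using \<open>m \<le> i\<close>
proof (induction rule: dec_induct)
  case base
  then show ?case by (simp add: mult.commute)
next
  case (step i)
  have nonneg: "\<And>k. 0 \<le> f k" and lc: "f (Suc (Suc i)) * f i \<le> (f (Suc i))\<^sup>2"
    and zero: "\<And>k. f k = 0 \<Longrightarrow> f (Suc k) = 0"
    using f unfolding log_concave_seq_def by auto
  show ?case
  proof (cases "f i = 0")
    case True
    then show ?thesis using zero[of i] zero[of "Suc i"] nonneg by simp
  next
    case False
    then have pos: "0 < f i" using nonneg[of i] by simp
    have "f (Suc (Suc i)) * f m * f i = (f (Suc (Suc i)) * f i) * f m" by (simp add: mult_ac)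
    also have "\<dots> \<le> (f (Suc i))\<^sup>2 * f m" using lc nonneg by (intro mult_right_mono) auto
    also have "\<dots> = f (Suc i) * (f (Suc i) * f m)" by (simp add: power2_eq_square mult_ac)
    also have "\<dots> \<le> f (Suc i) * (f i * f (Suc m))"
      using step.IH nonneg by (intro mult_left_mono) auto
    also have "\<dots> = f (Suc i) * f (Suc m) * f i" by (simp add: mult_ac)
    finally show ?thesis using pos by simp
  qed
qed

lemma log_concave_seq_le_geometric:
  assumes f: "log_concave_seq f" and pos: "0 < f (Suc j)"
  shows "f k * (f (Suc j) / f j) ^ j \<le> f j * (f (Suc j) / f j) ^ k"
proof -
  define \<rho> where "\<rho> = f (Suc j) / f j"
  have nonneg: "\<And>k. 0 \<le> f k" and zero: "\<And>k. f k = 0 \<Longrightarrow> f (Suc k) = 0"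
    using f unfolding log_concave_seq_def by auto
  have fj: "0 < f j" using pos nonneg[of j] zero[of j] by force
  have \<rho>: "0 < \<rho>" using pos fj by (simp add: \<rho>_def)
  show ?thesis unfolding \<rho>_def[symmetric]
  proof (cases "j \<le> k")
    case True
    then show "f k * \<rho> ^ j \<le> f j * \<rho> ^ k"
    proof (induction rule: dec_induct)
      case (step i)
      have "f (Suc i) * f j \<le> f i * f (Suc j)"
        using log_concave_seq_ratio_antimono[OF f step.hyps(1)] .
      then have "f (Suc i) \<le> f i * \<rho>" using fj by (simp add: \<rho>_def field_simps)
      then have "f (Suc i) * \<rho> ^ j \<le> (f i * \<rho> ^ j) * \<rho>"
        using mult_right_mono[of _ _ "\<rho> ^ j"] \<rho> by (simp add: mult_ac)
      also have "\<dots> \<le> (f j * \<rho> ^ i) * \<rho>" using step.IH \<rho> by (intro mult_right_mono) auto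
      finally show ?case by (simp add: mult_ac)
    qed simp
  next
    case False
    then have "k \<le> j" by simp
    then show "f k * \<rho> ^ j \<le> f j * \<rho> ^ k"
    proof (induction rule: inc_induct)
      case (step i)
      have "f (Suc j) * f i \<le> f j * f (Suc i)"
        using log_concave_seq_ratio_antimono[OF f] step.hyps(2) by simp
      then have "f i * \<rho> \<le> f (Suc i)" using fj by (simp add: \<rho>_def field_simps)
      then have "(f i * \<rho> ^ j) * \<rho> \<le> f (Suc i) * \<rho> ^ j"
        using mult_right_mono[of _ _ "\<rho> ^ j"] \<rho> by (simp add: mult_ac)
      also have "\<dots> \<le> f j * \<rho> ^ Suc i" using step.IH .
      finally show ?case using \<rho> by (simp add: mult_ac)
    qed simp
  qed
qed

lemma tail_sum_Suc: "k \<le> n \<Longrightarrow> (\<Sum>i=k..n. a i) = a k + (\<Sum>i=Suc k..n. a i)"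
  by (simp add: sum.atLeast_Suc_atMost)

lemma log_concave_seq_tail_sum:
  assumes a: "log_concave_seq a"
  shows "log_concave_seq (\<lambda>k. \<Sum>i=k..n. a i)"
proof -
  have nonneg: "\<And>k. 0 \<le> a k" using a unfolding log_concave_seq_def by auto
  define T where "T k = (\<Sum>i=k..n. a i)" for k
  have T_nonneg: "0 \<le> T k" for k unfolding T_def by (intro sum_nonneg nonneg)
  have T_Suc: "T k = a k + T (Suc k)" if "k \<le> n" for k
    using that by (simp add: T_def tail_sum_Suc)
  have hazard: "T (Suc m) * a m \<le> T m * a (Suc m)" for m
  proof -
    have "T (Suc m) = (\<Sum>i=Suc m..<Suc n. a i)"
      by (simp add: T_def atLeastLessThanSuc_atLeastAtMost)
    also have "\<dots> = (\<Sum>i=m..<n. a (Suc i))"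
      by (rule sum.shift_bounds_Suc_ivl)
    finally have "T (Suc m) * a m = (\<Sum>i=m..<n. a (Suc i) * a m)"
      by (simp add: sum_distrib_right)
    also have "\<dots> \<le> (\<Sum>i=m..<n. a i * a (Suc m))"
      by (intro sum_mono log_concave_seq_ratio_antimono[OF a]) simp
    also have "\<dots> \<le> (\<Sum>i=m..n. a i * a (Suc m))"
      using nonneg by (intro sum_mono2) (auto intro: mult_nonneg_nonneg)
    finally show ?thesis by (simp add: T_def sum_distrib_right)
  qed
  have lc: "T (Suc (Suc k)) * T k \<le> (T (Suc k))\<^sup>2" for k
  proof (cases "k < n")
    case True
    have "T (Suc (Suc k)) * T k = (T (Suc k))\<^sup>2 + (T (Suc k) * a k - T k * a (Suc k))"
      using T_Suc[of k] T_Suc[of "Suc k"] True by (simp add: power2_eq_square algebra_simps)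
    then show ?thesis using hazard[of k] by linarith
  next
    case False
    then show ?thesis by (simp add: T_def)
  qed
  have zero: "T (Suc k) = 0" if "T k = 0" for k
  proof (cases "k \<le> n")
    case True
    then show ?thesis using that T_Suc[of k] nonneg[of k] T_nonneg[of "Suc k"] by simp
  next
    case False
    then show ?thesis by (simp add: T_def)
  qed
  show ?thesis
    using T_nonneg lc zero unfolding log_concave_seq_def T_def by blast
qed

lemma tail_sum_ratio_ge:
  fixes a :: "nat \<Rightarrow> real"
  assumes nonneg: "\<And>i. 0 \<le> a i" and "j < n" and ratio: "r * a j \<le> a (Suc j)"
  shows "r * (\<Sum>i=j..n. a i) \<le> (1 + r) * (\<Sum>i=Suc j..n. a i)"
proof -
  have "a (Suc j) \<le> (\<Sum>i=Suc j..n. a i)"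
    using \<open>j < n\<close> nonneg by (simp add: tail_sum_Suc sum_nonneg)
  then show ?thesis using ratio \<open>j < n\<close> by (simp add: tail_sum_Suc algebra_simps)
qed

lemma binomial_pmf_Suc:
  assumes "0 \<le> p" "p \<le> 1" "k < n"
  shows "pmf (binomial_pmf n p) (Suc k) * (real (Suc k) * (1 - p))
       = pmf (binomial_pmf n p) k * (real (n - k) * p)"
proof -
  have choose: "real (n choose Suc k) * real (Suc k) = real (n choose k) * real (n - k)"
    using binomial_absorb_comp[of n k] times_binomial_minus1_eq[of "Suc k" n]
    by (metis diff_Suc_1 mult.commute of_nat_mult zero_less_Suc)
  have "n - k = Suc (n - Suc k)" using \<open>k < n\<close> by simp
  then show ?thesis using assms choose by (simp add: pmf_binomial)
qed

lemma log_concave_seq_binomial_pmf: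
  assumes p: "0 < p" "p < 1"
  shows "log_concave_seq (pmf (binomial_pmf n p))"
  unfolding log_concave_seq_def
proof (intro conjI allI impI)
  fix k
  let ?P = "pmf (binomial_pmf n p)"
  show "?P (Suc (Suc k)) * ?P k \<le> (?P (Suc k))\<^sup>2"
  proof (cases "Suc k < n")
    case True
    have r1: "?P k * (real (n - k) * p) = ?P (Suc k) * (real (Suc k) * (1 - p))"
      and r2: "?P (Suc (Suc k)) * (real (Suc (Suc k)) * (1 - p))
          = ?P (Suc k) * (real (n - Suc k) * p)"
      using p True binomial_pmf_Suc[of p k n] binomial_pmf_Suc[of p "Suc k" n] by simp_all
    have "real (n - Suc k) * real (Suc k) \<le> real (n - k) * real (Suc (Suc k))"
      using True by (simp add: of_nat_diff algebra_simps)
    define c where "c = real (n - k) * real (Suc (Suc k)) * (p * (1 - p))"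
    have c: "0 < c" using p True by (simp add: c_def)
    have "?P (Suc (Suc k)) * ?P k * c
        = (?P (Suc (Suc k)) * (real (Suc (Suc k)) * (1 - p))) * (?P k * (real (n - k) * p))"
      by (simp add: c_def mult_ac)
    also have "\<dots> = (?P (Suc k))\<^sup>2 * (real (n - Suc k) * real (Suc k) * (p * (1 - p)))"
      unfolding r1 r2 by (simp add: power2_eq_square mult_ac)
    also have "\<dots> \<le> (?P (Suc k))\<^sup>2 * c"
      unfolding c_def using p \<open>real (n - Suc k) * real (Suc k) \<le> _\<close>
      by (intro mult_left_mono mult_right_mono) auto
    finally show ?thesis using c by simp
  next
    case False
    then show ?thesis using p by (simp add: pmf_binomial binomial_eq_0)
  qed
next
  fix k
  assume "pmf (binomial_pmf n p) k = 0"
  then have "n < k" using p by (simp add: pmf_binomial)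
  then show "pmf (binomial_pmf n p) (Suc k) = 0" using p by (simp add: pmf_binomial)
qed simp

lemma binom_tail_eq_sum:
  assumes "0 < p" "p < 1"
  shows "binom_tail n p x = (\<Sum>i=nat \<lceil>x\<rceil>..n. pmf (binomial_pmf n p) i)"
proof -
  have "binom_tail n p x
      = measure_pmf.prob (binomial_pmf n p) ({k. x \<le> real k} \<inter> set_pmf (binomial_pmf n p))"
    unfolding binom_tail_def by (simp add: measure_Int_set_pmf)
  also have "{k. x \<le> real k} \<inter> set_pmf (binomial_pmf n p) = {nat \<lceil>x\<rceil>..n}"
    using assms by (auto simp: ceiling_le_iff nat_le_iff)
  finally show ?thesis by (simp add: measure_measure_pmf_finite)
qed

lemma binom_tail_of_nat:
  "0 < p \<Longrightarrow> p < 1 \<Longrightarrow> binom_tail n p (real k) = (\<Sum>i=k..n. pmf (binomial_pmf n p) i)"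
  by (simp add: binom_tail_eq_sum)

lemma binom_tail_nonneg: "0 \<le> binom_tail n p x"
  by (simp add: binom_tail_def)

lemma binom_tail_le_1: "binom_tail n p x \<le> 1"
  by (simp add: binom_tail_def)

lemma binom_tail_nonpos: "x \<le> 0 \<Longrightarrow> binom_tail n p x = 1"
proof -
  assume "x \<le> 0"
  then have "{k. x \<le> real k} = UNIV" by (auto intro: order_trans[OF _ of_nat_0_le_iff])
  then show ?thesis by (simp add: binom_tail_def)
qed

lemma binom_tail_Suc:
  assumes "0 < p" "p < 1" "k \<le> n"
  shows "binom_tail n p k = pmf (binomial_pmf n p) k + binom_tail n p (Suc k)"
  using assms by (simp add: binom_tail_of_nat tail_sum_Suc del: of_nat_Suc)

lemma binom_tail_pos:
  assumes "0 < p" "p < 1" "k \<le> n"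
  shows "0 < binom_tail n p k"
  unfolding binom_tail_of_nat[OF assms(1,2)] using assms
  by (intro sum_pos2[of _ k]) (auto simp: pmf_binomial)

lemma binom_tail_ratio_bounds:
  assumes "0 < p" "p < 1" "j < n"
  shows "0 < binom_tail n p (Suc j) / binom_tail n p j"
    and "binom_tail n p (Suc j) / binom_tail n p j < 1"
proof -
  have "0 < x / (y + x)" "x / (y + x) < 1" if "0 < x" "0 < y" for x y :: real
    using that by (simp_all add: divide_less_eq)
  moreover have "0 < pmf (binomial_pmf n p) j" using assms by (simp add: pmf_binomial)
  moreover have "0 < binom_tail n p (Suc j)" using assms by (intro binom_tail_pos) auto
  ultimately show "0 < binom_tail n p (Suc j) / binom_tail n p j"
    and "binom_tail n p (Suc j) / binom_tail n p j < 1"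
    unfolding binom_tail_Suc[of p j n, OF assms(1,2) less_imp_le[OF assms(3)]] by blast+
qed

lemma binom_tail_le_geometric:
  assumes p: "0 < p" "p < 1" and "j < n"
  defines "\<rho> \<equiv> binom_tail n p (Suc j) / binom_tail n p j"
  shows "binom_tail n p (real_of_int k) \<le> binom_tail n p j * \<rho> powr (k - j)"
proof -
  define T where "T m = (\<Sum>i=m..n. pmf (binomial_pmf n p) i)" for m
  have T: "binom_tail n p (real m) = T m" for m
    using p by (simp add: T_def binom_tail_of_nat)
  have \<rho>: "0 < \<rho>" "\<rho> < 1"
    using binom_tail_ratio_bounds[OF p \<open>j < n\<close>] by (simp_all add: \<rho>_def)
  have \<rho>T: "\<rho> = T (Suc j) / T j" unfolding \<rho>_def T ..
  have pos: "0 < T j" "0 < T (Suc j)"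
    unfolding T[symmetric] using \<open>j < n\<close> by (intro binom_tail_pos[OF p], simp)+
  have lc: "log_concave_seq T"
    unfolding T_def using p by (intro log_concave_seq_tail_sum log_concave_seq_binomial_pmf)
  have geom: "T m \<le> T j * \<rho> powr (real m - real j)" for m
  proof -
    have "T m * \<rho> ^ j \<le> T j * \<rho> ^ m"
      using log_concave_seq_le_geometric[OF lc pos(2)] unfolding \<rho>T .
    then have "T m \<le> T j * \<rho> ^ m / \<rho> ^ j" using \<rho> by (simp add: le_divide_eq)
    also have "\<dots> = T j * \<rho> powr (real m - real j)"
      using \<rho> by (simp add: powr_diff powr_realpow)
    finally show ?thesis .
  qed
  show ?thesis
  proof (cases "0 \<le> k")
    case True
    then show ?thesis using geom[of "nat k"] T[of "nat k"] T[of j] by simp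
  next
    case False
    have "binom_tail n p (real_of_int k) = T 0"
      using False binom_tail_nonpos[of "real_of_int k" n p] binom_tail_nonpos[of 0 n p] T[of 0]
      by simp
    also have "\<dots> \<le> T j * \<rho> powr (real 0 - real j)" by (rule geom)
    also have "\<dots> \<le> T j * \<rho> powr (real_of_int k - real j)"
      using False \<rho> pos by (intro mult_left_mono powr_mono') auto
    finally show ?thesis by (simp add: T)
  qed
qed

section \<open>Comparing the two majorants\<close>

lemma Q_Lin_LC_le_Q_LC_of_ustar_eq_nonpos:
  assumes p: "0 < p" "p < 1" and "j < n" and x: "real j < x" "x \<le> real j + 1"
    and ustar: "ustar_eq (binom_tail n p (Suc j) / binom_tail n p j) \<le> 0"
  shows "Q_Lin_LC n p (x + 1/2) \<le> Q_LC n p x"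
proof -
  define \<rho> where "\<rho> = binom_tail n p (Suc j) / binom_tail n p j"
  define t where "t = x - j"
  have \<rho>: "0 < \<rho>" "\<rho> < 1" using binom_tail_ratio_bounds[OF p \<open>j < n\<close>] by (simp_all add: \<rho>_def)
  have Tj: "0 < binom_tail n p j" using binom_tail_pos[OF p] \<open>j < n\<close> by simp
  have "Q_Lin_LC n p (x + 1/2) \<le> binom_tail n p j * \<rho> powr (x - j)"
    unfolding Q_Lin_LC_def using \<rho> ustar binom_tail_le_geometric[OF p \<open>j < n\<close>]
    by (intro LC_majorant_lin_interp_le_geometric) (auto simp: \<rho>_def binom_tail_nonneg)
  also have "\<dots> = binom_tail n p j powr (1 - t) * binom_tail n p (Suc j) powr t"
    using Tj binom_tail_nonneg[of n p "Suc j"] by (simp add: \<rho>_def t_def powr_divide powr_diff)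
  also have "\<dots> \<le> Q_LC n p ((1 - t) * real j + t * real (Suc j))"
    unfolding Q_LC_def using x
    by (intro LC_majorant_ge_interpolation[OF log_concave_const[of 1]])
      (auto simp: t_def binom_tail_le_1 binom_tail_nonneg)
  also have "(1 - t) * real j + t * real (Suc j) = x" by (simp add: t_def algebra_simps)
  finally show ?thesis .
qed

lemma Q_Lin_LC_le_Q_LC_of_nonpos:
  assumes "x \<le> 0"
  shows "Q_Lin_LC n p (x + 1/2) \<le> Q_LC n p x"
proof -
  have "Q_Lin_LC n p (x + 1/2) \<le> 1"
    unfolding Q_Lin_LC_def
    by (intro LC_majorant_le[OF log_concave_const] lin_interp_le_const binom_tail_le_1) simp
  also have "1 \<le> Q_LC n p x"
    unfolding Q_LC_def using binom_tail_nonpos[OF assms, of n p]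
    by (intro LC_majorant_ge[OF log_concave_const[of 1]])
      (auto simp: binom_tail_le_1 dest: spec[of _ x])
  finally show ?thesis .
qed

lemma u_star_le_binom_tail_ratio:
  assumes p: "0 < p" "p < 1" and "j < n"
    and cond: "u_sstar * (1 - p) * (real j + 1) \<le> (real n - real j) * p"
  shows "u_star \<le> binom_tail n p (Suc j) / binom_tail n p j"
proof -
  let ?a = "pmf (binomial_pmf n p)"
  have "(u_sstar * ?a j) * (real (Suc j) * (1 - p)) = (u_sstar * (1 - p) * (real j + 1)) * ?a j"
    by (simp add: algebra_simps)
  also have "\<dots> \<le> ((real n - real j) * p) * ?a j" using cond by (rule mult_right_mono) simp
  also have "\<dots> = ?a (Suc j) * (real (Suc j) * (1 - p))"
    using binomial_pmf_Suc[of p j n] p \<open>j < n\<close> by (simp add: of_nat_diff mult_ac)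
  finally have ratio: "u_sstar * ?a j \<le> ?a (Suc j)" using p by simp
  have "u_sstar * binom_tail n p j \<le> (1 + u_sstar) * binom_tail n p (Suc j)"
    unfolding binom_tail_of_nat[OF p] using ratio \<open>j < n\<close> by (intro tail_sum_ratio_ge) auto
  then have "(1 - u_star) * (u_sstar * binom_tail n p j)
      \<le> (1 - u_star) * ((1 + u_sstar) * binom_tail n p (Suc j))"
    using u_star_less_1 by (intro mult_left_mono) auto
  moreover have "(1 - u_star) * u_sstar = u_star" "(1 - u_star) * (1 + u_sstar) = 1"
    using u_star_less_1 by (simp_all add: u_sstar_def field_simps)
  ultimately have "u_star * binom_tail n p j \<le> binom_tail n p (Suc j)"
    by (simp flip: mult.assoc)
  moreover have "0 < binom_tail n p j" using binom_tail_pos[OF p] \<open>j < n\<close> by simp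
  ultimately show ?thesis by (simp add: le_divide_eq)
qed

lemma Q_Lin_LC_le_Q_LC_if_ceiling_bound:
  assumes p: "0 < p" "p < 1" and "x \<le> real n"
    and cond: "u_sstar * (1 - p) / p * \<lceil>x\<rceil> \<le> real n + 1 - \<lceil>x\<rceil>"
  shows "Q_Lin_LC n p (x + 1/2) \<le> Q_LC n p x"
proof (cases "x \<le> 0")
  case True
  then show ?thesis by (rule Q_Lin_LC_le_Q_LC_of_nonpos)
next
  case False
  define j where "j = nat (\<lceil>x\<rceil> - 1)"
  have j: "real j + 1 = \<lceil>x\<rceil>" using False by (simp add: j_def)
  have x: "real j < x" "x \<le> real j + 1" using j by linarith+
  have "\<lceil>x\<rceil> \<le> int n" using \<open>x \<le> real n\<close> by (intro ceiling_le) simp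
  then have "real j + 1 \<le> real n" using j by (metis of_int_le_iff of_int_of_nat_eq)
  then have "j < n" by simp
  have "u_sstar * (1 - p) * (real j + 1) = (u_sstar * (1 - p) / p * \<lceil>x\<rceil>) * p"
    using p by (simp add: j)
  also have "\<dots> \<le> (real n + 1 - \<lceil>x\<rceil>) * p" using cond p by (intro mult_right_mono) auto
  also have "\<dots> = (real n - real j) * p" by (simp flip: j)
  finally have "u_sstar * (1 - p) * (real j + 1) \<le> (real n - real j) * p" .
  then have "u_star \<le> binom_tail n p (Suc j) / binom_tail n p j"
    using u_star_le_binom_tail_ratio[OF p \<open>j < n\<close>] by simp
  then have "ustar_eq (binom_tail n p (Suc j) / binom_tail n p j) \<le> 0"
    using binom_tail_ratio_bounds[OF p \<open>j < n\<close>] by (intro ustar_eq_nonpos_above_u_star)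
  then show ?thesis by (rule Q_Lin_LC_le_Q_LC_of_ustar_eq_nonpos[OF p \<open>j < n\<close> x])
qed

lemma Q_Lin_LC_le_Q_LC_below_j_sstar:
  assumes p: "0 < p" "p < 1" and x: "x \<le> real_of_int (j_sstar n p)"
  shows "Q_Lin_LC n p (x + 1/2) \<le> Q_LC n p x"
proof (rule Q_Lin_LC_le_Q_LC_if_ceiling_bound[OF p])
  define r where "r = u_sstar * (1 - p) / p"
  have r: "0 \<le> r" using u_sstar_pos p by (simp add: r_def)
  have "\<lceil>x\<rceil> \<le> \<lfloor>(real n - r) / (1 + r)\<rfloor>"
    using x by (simp add: ceiling_le_iff j_sstar_def r_def Let_def)
  then have "real_of_int \<lceil>x\<rceil> \<le> (real n - r) / (1 + r)"
    by (meson floor_le_iff le_floor_iff of_int_le_iff order_trans)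
  then have le: "\<lceil>x\<rceil> + r * \<lceil>x\<rceil> + r \<le> real n" using r by (simp add: le_divide_eq algebra_simps)
  have "real_of_int \<lceil>x\<rceil> \<le> real n"
  proof (cases "0 \<le> \<lceil>x\<rceil>")
    case True
    then have "0 \<le> r * \<lceil>x\<rceil>" using r by simp
    then show ?thesis using le r by linarith
  next
    case False
    then have "real_of_int \<lceil>x\<rceil> \<le> 0" by simp
    then show ?thesis by (meson of_nat_0_le_iff order_trans)
  qed
  then show "x \<le> real n" by linarith
  show "r * \<lceil>x\<rceil> \<le> real n + 1 - \<lceil>x\<rceil>" using le r by linarith
qed

lemma Q_Lin_LC_le_Q_LC_small_n:
  assumes p: "0 < p" "p < 1" and n: "real n \<le> p / (1 - p) * (1 / u_sstar)" and "x \<le> real n"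
  shows "Q_Lin_LC n p (x + 1/2) \<le> Q_LC n p x"
proof (rule Q_Lin_LC_le_Q_LC_if_ceiling_bound[OF p \<open>x \<le> real n\<close>])
  define r where "r = u_sstar * (1 - p) / p"
  have r: "0 \<le> r" using u_sstar_pos p by (simp add: r_def)
  have "\<lceil>x\<rceil> \<le> int n" using \<open>x \<le> real n\<close> by (intro ceiling_le) simp
  then have ceil: "real_of_int \<lceil>x\<rceil> \<le> real n" by (metis of_int_le_iff of_int_of_nat_eq)
  have "r * \<lceil>x\<rceil> \<le> r * real n" using r ceil by (rule mult_left_mono[rotated])
  also have "\<dots> \<le> r * (p / (1 - p) * (1 / u_sstar))" using r n by (rule mult_left_mono[rotated])
  also have "\<dots> = 1" using p u_sstar_pos by (simp add: r_def field_simps)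
  finally show "u_sstar * (1 - p) / p * \<lceil>x\<rceil> \<le> real n + 1 - \<lceil>x\<rceil>"
    using ceil by (simp add: r_def)
qed

theorem proposition2p7:
  fixes n :: nat and p :: real
  assumes "1 \<le> n" and "0 < p" and "p < 1"
  shows
    "(\<exists>!u. 0 < u \<and> u < 1 \<and> ustar_eq u = 0)
     \<and> 0.00505778 \<le> u_star \<and> u_star < 0.00505779
     \<and> 0.00508349 \<le> u_sstar \<and> u_sstar < 0.00508350
     \<and> (\<forall>x::real. x \<le> real_of_int (j_sstar n p) \<longrightarrow>
           Q_Lin_LC n p (x + 1/2) \<le> Q_LC n p x)
     \<and> 196.714 \<le> 1 / u_sstar \<and> 1 / u_sstar < 196.715
     \<and> (real n \<le> p / (1 - p) * (1 / u_sstar) \<longrightarrow>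
         (\<forall>x::real. x \<le> real n \<longrightarrow> Q_Lin_LC n p (x + 1/2) \<le> Q_LC n p x))
     \<and> (n \<le> 196 \<and> 1/2 \<le> p \<longrightarrow>
         (\<forall>x::real. x \<le> real n \<longrightarrow> Q_Lin_LC n p (x + 1/2) \<le> Q_LC n p x))"
proof -
  have p: "0 < p" "p < 1" using assms(2,3) by simp_all
  have "real n \<le> p / (1 - p) * (1 / u_sstar)" if "n \<le> 196" "1/2 \<le> p"
  proof -
    have "real n * 1 \<le> 196.714 * (p / (1 - p))"
      using that p by (intro mult_mono) (simp_all add: le_divide_eq)
    also have "\<dots> \<le> 1 / u_sstar * (p / (1 - p))"
      using u_sstar_bounds p by (intro mult_right_mono) simp_all
    finally show ?thesis by (simp add: mult.commute)
  qed
  then have small_n: "n \<le> 196 \<and> 1/2 \<le> p \<longrightarrow> real n \<le> p / (1 - p) * (1 / u_sstar)"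
    by blast
  have u_star: "0.00505778 \<le> u_star" "u_star < 0.00505779"
    using u_star_bounds by simp_all
  show ?thesis
    using ustar_eq_ex1_zero u_star u_sstar_bounds small_n
      Q_Lin_LC_le_Q_LC_below_j_sstar[OF p] Q_Lin_LC_le_Q_LC_small_n[OF p]
    by blast
qed

end
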